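(* Let $p = p_{AB}$ be a probability distribution on $A\times B$ with $|A| = |B| = d$, and write $\eta = d_H^2(p\|p_A\times p_B)$. Then $I(A:B)_p\le\eta\cdot O(\log(d/\eta))$.
   Context: $p_A,p_B$ are the marginals of $p$. The squared Hellinger distance is $d_H^2(p\|q) = \sum_i(\sqrt{p_i}-\sqrt{q_i})^2$. $I(A:B)_p = \sum_{a,b}p(a,b)\ln\frac{p(a,b)}{p_A(a)p_B(b)}$. The $O(\cdot)$ hides a universal constant. *)

theory Defs
  imports Complex_Main
begin

definition is_joint_dist :: "'a set \<Rightarrow> 'b set \<Rightarrow> ('a \<Rightarrow> 'b \<Rightarrow> real) \<Rightarrow> bool" where
  "is_joint_dist A B p \<longleftrightarrow> (\<forall>a\<in>A. \<forall>b\<in>B. p a b \<ge> 0) \<and> (\<Sum>a\<in>A. \<Sum>b\<in>B. p a b) = 1"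

definition marg_A :: "'b set \<Rightarrow> ('a \<Rightarrow> 'b \<Rightarrow> real) \<Rightarrow> 'a \<Rightarrow> real" where
  "marg_A B p a = (\<Sum>b\<in>B. p a b)"

definition marg_B :: "'a set \<Rightarrow> ('a \<Rightarrow> 'b \<Rightarrow> real) \<Rightarrow> 'b \<Rightarrow> real" where
  "marg_B A p b = (\<Sum>a\<in>A. p a b)"

definition hellinger_sq_prod :: "'a set \<Rightarrow> 'b set \<Rightarrow> ('a \<Rightarrow> 'b \<Rightarrow> real) \<Rightarrow> real" where
  "hellinger_sq_prod A B p =
     (\<Sum>a\<in>A. \<Sum>b\<in>B. (sqrt (p a b) - sqrt (marg_A B p a * marg_B A p b))^2)"

text \<open>Mutual information I(A:B)_p (natural log; terms with p(a,b)=0 vanish).\<close>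
definition mutual_info :: "'a set \<Rightarrow> 'b set \<Rightarrow> ('a \<Rightarrow> 'b \<Rightarrow> real) \<Rightarrow> real" where
  "mutual_info A B p =
     (\<Sum>a\<in>A. \<Sum>b\<in>B. p a b * ln (p a b / (marg_A B p a * marg_B A p b)))"

end

theory Submission
  imports Defs
begin

text \<open>Write q = p_A p_B. Since p \<le> p_A and p \<le> p_B pointwise, q \<ge> p^2, and since p and q
  both have mass 1, I(A:B) is the sum of the terms p ln (p/q) - p + q. Such a term is
  at most 5 (sqrt p - sqrt q)^2 when p \<le> 4 q; otherwise p \<le> 4 (sqrt p - sqrt q)^2 and
  ln (p/q) \<le> ln (1/p), which bounds it by 4 (sqrt p - sqrt q)^2 ln (1/t) + t for any 0 < t \<le> 1.
  Summing with t = \<eta>/d^2 gives I \<le> 6 \<eta> + 4 \<eta> ln (d^2/\<eta>). Finally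
  \<eta> = 2 - 2 \<Sum> sqrt (p q) \<le> 2 - 2/sqrt d, because
  \<Sum> sqrt (p q) \<ge> \<Sum>_b p_B(b)^(3/2) \<ge> 1/sqrt d by convexity; hence d/\<eta> \<ge> 3/2 and \<eta> \<le> 2,
  so ln (d^2/\<eta>) = ln d + ln (d/\<eta>) = O(ln (d/\<eta>)).\<close>

lemma kl_summand_le_if_comparable:
  fixes p q :: real
  assumes "0 < p" "0 < q" "p \<le> 4 * q"
  shows "p * ln (p / q) - p + q \<le> 5 * (sqrt p - sqrt q)\<^sup>2"
proof -
  define s u where "s = sqrt p" and "u = sqrt q"
  have "0 < s" "0 < u" "p = s\<^sup>2" "q = u\<^sup>2" using assms by (auto simp: s_def u_def)
  have "s \<le> 2 * u"
    using real_sqrt_le_mono[OF \<open>p \<le> 4 * q\<close>] by (simp add: s_def u_def real_sqrt_mult)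
  have "ln (p / q) = 2 * ln (s / u)"
    using \<open>0 < s\<close> \<open>0 < u\<close> by (simp add: \<open>p = s\<^sup>2\<close> \<open>q = u\<^sup>2\<close> power_divide[symmetric] ln_realpow)
  also have "\<dots> \<le> 2 * (s / u - 1)"
    using ln_le_minus_one[of "s / u"] \<open>0 < s\<close> \<open>0 < u\<close> by simp
  finally have "p * ln (p / q) - p + q \<le> s\<^sup>2 * (2 * (s / u - 1)) - s\<^sup>2 + u\<^sup>2"
    using \<open>0 < p\<close> by (simp add: \<open>p = s\<^sup>2\<close> \<open>q = u\<^sup>2\<close> mult_left_mono)
  also have "\<dots> = (s - u)\<^sup>2 * (2 * s + u) / u"
    using \<open>0 < u\<close> by (simp add: field_simps power2_eq_square)
  also have "\<dots> \<le> (s - u)\<^sup>2 * (5 * u) / u"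
    using \<open>s \<le> 2 * u\<close> \<open>0 < u\<close> by (intro divide_right_mono mult_left_mono) auto
  finally show ?thesis using \<open>0 < u\<close> by (simp add: s_def u_def)
qed

lemma kl_summand_le_if_dominant:
  fixes p q t :: real
  assumes "0 < p" "p\<^sup>2 \<le> q" "4 * q < p" "0 < t" "t \<le> 1"
  shows "p * ln (p / q) - p + q \<le> 4 * (sqrt p - sqrt q)\<^sup>2 * ln (1 / t) + t"
proof -
  have "0 < q" using assms(1,2) by (smt (verit) zero_less_power2)
  have "2 * sqrt q < sqrt p"
    using real_sqrt_less_mono[OF \<open>4 * q < p\<close>] by (simp add: real_sqrt_mult)
  then have "(sqrt p / 2)\<^sup>2 \<le> (sqrt p - sqrt q)\<^sup>2"
    using \<open>0 < p\<close> by (intro power_mono) auto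
  then have p_le: "p \<le> 4 * (sqrt p - sqrt q)\<^sup>2"
    using \<open>0 < p\<close> by (simp add: power_divide)
  have "ln (p / q) \<le> ln (1 / p)"
    using \<open>0 < p\<close> \<open>0 < q\<close> \<open>p\<^sup>2 \<le> q\<close> by (simp add: power2_eq_square field_simps)
  also have "\<dots> = ln (1 / t) + ln (t / p)"
    using \<open>0 < p\<close> \<open>0 < t\<close> by (simp add: ln_div)
  also have "\<dots> \<le> ln (1 / t) + (t / p - 1)"
    using ln_le_minus_one[of "t / p"] \<open>0 < p\<close> \<open>0 < t\<close> by simp
  finally have "p * ln (p / q) \<le> p * ln (1 / t) + t - p"
    using \<open>0 < p\<close> by (simp add: mult_left_mono field_simps)
  moreover have "p * ln (1 / t) \<le> 4 * (sqrt p - sqrt q)\<^sup>2 * ln (1 / t)"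
    using p_le assms(4,5) by (intro mult_right_mono) auto
  ultimately show ?thesis using \<open>4 * q < p\<close> \<open>0 < q\<close> by linarith
qed

lemma kl_summand_le:
  fixes p q t :: real
  assumes "0 \<le> p" "p\<^sup>2 \<le> q" "0 < t" "t \<le> 1"
  shows "p * ln (p / q) - p + q \<le> 5 * (sqrt p - sqrt q)\<^sup>2 + 4 * (sqrt p - sqrt q)\<^sup>2 * ln (1 / t) + t"
proof -
  have "0 \<le> q" using assms(2) by (smt (verit) zero_le_power2)
  have "0 \<le> 4 * (sqrt p - sqrt q)\<^sup>2 * ln (1 / t)" using assms(3,4) by simp
  consider "p = 0" | "0 < p" "p \<le> 4 * q" | "0 < p" "4 * q < p" using assms(1) by linarith
  then show ?thesis
  proof cases
    case 1
    then show ?thesis using \<open>0 \<le> q\<close> assms(3,4) by simp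
  next
    case 2
    then have "0 < q" using assms(2) by (smt (verit) zero_less_power2)
    with 2 have "p * ln (p / q) - p + q \<le> 5 * (sqrt p - sqrt q)\<^sup>2"
      by (intro kl_summand_le_if_comparable)
    then show ?thesis using \<open>0 \<le> 4 * (sqrt p - sqrt q)\<^sup>2 * ln (1 / t)\<close> assms(3) by linarith
  next
    case 3
    with assms have "p * ln (p / q) - p + q \<le> 4 * (sqrt p - sqrt q)\<^sup>2 * ln (1 / t) + t"
      by (intro kl_summand_le_if_dominant)
    then show ?thesis using zero_le_power2[of "sqrt p - sqrt q"] by linarith
  qed
qed

lemma sum_x_sqrt_x_ge:
  fixes x :: "'a \<Rightarrow> real"
  assumes "finite B" "\<And>b. b \<in> B \<Longrightarrow> 0 \<le> x b" "(\<Sum>b\<in>B. x b) = 1"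
  shows "1 / sqrt (card B) \<le> (\<Sum>b\<in>B. x b * sqrt (x b))"
proof -
  define n c where "n = real (card B)" and "c = 1 / sqrt n"
  have "0 < n" using assms by (auto simp: n_def card_gt_0_iff)
  have tangent: "c ^ 3 + 3 / 2 * c * (y - c\<^sup>2) \<le> y * sqrt y" if "0 \<le> y" for y
  proof -
    have "0 \<le> (sqrt y - c)\<^sup>2 * (2 * sqrt y + c)" using \<open>0 < n\<close> that by (simp add: c_def)
    also have "\<dots> = 2 * sqrt y ^ 3 - 2 * c ^ 3 - 3 * c * (sqrt y ^ 2 - c\<^sup>2)"
      by (simp add: algebra_simps power2_eq_square power3_eq_cube)
    finally show ?thesis using \<open>0 \<le> y\<close> by (simp add: power3_eq_cube)
  qed
  have "c = n * c ^ 3 + 3 / 2 * c * (1 - n * c\<^sup>2)"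
    using \<open>0 < n\<close> by (simp add: c_def power3_eq_cube power2_eq_square)
  also have "\<dots> = (\<Sum>b\<in>B. c ^ 3 + 3 / 2 * c * (x b - c\<^sup>2))"
    by (simp only: sum.distrib sum_subtractf sum_distrib_left[symmetric] assms(3)) (simp add: n_def)
  also have "\<dots> \<le> (\<Sum>b\<in>B. x b * sqrt (x b))"
    using tangent assms(2) by (intro sum_mono) auto
  finally show ?thesis by (simp add: c_def n_def)
qed

lemma hellinger_ratio_ge_three_halves:
  fixes d \<eta> :: real
  assumes "0 < d" "0 < \<eta>" "\<eta> \<le> 2 - 2 / sqrt d"
  shows "3 * \<eta> \<le> 2 * d" and "1 \<le> d"
proof -
  define s where "s = sqrt d"
  have "0 < s" "d = s\<^sup>2" using \<open>0 < d\<close> by (auto simp: s_def)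
  have "2 / s < 2"
    using assms(2,3) by (simp add: s_def)
  then have "1 < s"
    using \<open>0 < s\<close> by (simp add: field_simps)
  then show "1 \<le> d" using \<open>d = s\<^sup>2\<close> by (simp add: one_le_power)
  have "3 * \<eta> * s \<le> (6 - 6 / s) * s"
    using assms(3) \<open>0 < s\<close> by (simp add: s_def)
  also have "\<dots> = 2 * s ^ 3 - ((s - 1)\<^sup>2 * (2 * s + 4) + 2)"
    using \<open>0 < s\<close> by (simp add: field_simps power2_eq_square power3_eq_cube)
  also have "\<dots> \<le> 2 * s ^ 3"
    using \<open>1 < s\<close> zero_le_power2[of "s - 1"] by (smt (verit) mult_nonneg_nonneg)
  also have "\<dots> = 2 * d * s"
    by (simp add: \<open>d = s\<^sup>2\<close> power2_eq_square power3_eq_cube)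
  finally show "3 * \<eta> \<le> 2 * d" using \<open>0 < s\<close> by simp
qed

lemma hellinger_log_estimate:
  fixes d \<eta> :: real
  assumes "0 < d" "0 < \<eta>" "\<eta> \<le> 2 - 2 / sqrt d"
  shows "\<eta> \<le> d\<^sup>2" and "6 * \<eta> + 4 * \<eta> * ln (d\<^sup>2 / \<eta>) \<le> 38 * \<eta> * ln (d / \<eta>)"
proof -
  define M where "M = ln (d / \<eta>)"
  have "3 * \<eta> \<le> 2 * d" "1 \<le> d" using hellinger_ratio_ge_three_halves assms by auto
  then have "d \<le> d\<^sup>2" by (simp add: power2_eq_square)
  then show "\<eta> \<le> d\<^sup>2" using \<open>3 * \<eta> \<le> 2 * d\<close> assms(2) by linarith
  have "ln (2 / 3 :: real) \<le> 2 / 3 - 1" by (rule ln_le_minus_one) simp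
  moreover have "ln (3 / 2) \<le> M"
    using \<open>3 * \<eta> \<le> 2 * d\<close> assms(2) by (simp add: M_def field_simps)
  ultimately have "1 / 3 \<le> M" by (simp add: ln_div)
  have "2 / sqrt d \<ge> 0" using assms(1) by simp
  then have "ln \<eta> \<le> 1"
    using ln_le_minus_one[of \<eta>] assms(2,3) by linarith
  then have "ln (d\<^sup>2 / \<eta>) \<le> 5 * M"
    using assms \<open>1 / 3 \<le> M\<close> by (simp add: M_def ln_div ln_mult power2_eq_square)
  then have "6 * \<eta> + 4 * \<eta> * ln (d\<^sup>2 / \<eta>) \<le> 18 * \<eta> * (1 / 3) + 20 * \<eta> * M"
    using assms(2) by simp
  also have "\<dots> \<le> 38 * \<eta> * M"
    using \<open>1 / 3 \<le> M\<close> assms(2) by simp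
  finally show "6 * \<eta> + 4 * \<eta> * ln (d\<^sup>2 / \<eta>) \<le> 38 * \<eta> * ln (d / \<eta>)" by (simp add: M_def)
qed

locale joint_dist =
  fixes A :: "'a set" and B :: "'b set" and p :: "'a \<Rightarrow> 'b \<Rightarrow> real"
  assumes finite_A: "finite A" and finite_B: "finite B" and dist: "is_joint_dist A B p"
begin

definition marg_prod :: "'a \<Rightarrow> 'b \<Rightarrow> real" where
  "marg_prod a b = marg_A B p a * marg_B A p b"

lemma nonneg: "a \<in> A \<Longrightarrow> b \<in> B \<Longrightarrow> 0 \<le> p a b"
  using dist by (simp add: is_joint_dist_def)

lemma sum_eq_1: "(\<Sum>a\<in>A. \<Sum>b\<in>B. p a b) = 1"
  using dist by (simp add: is_joint_dist_def)

lemma marg_A_nonneg: "a \<in> A \<Longrightarrow> 0 \<le> marg_A B p a"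
  unfolding marg_A_def using nonneg by (intro sum_nonneg) auto

lemma marg_B_nonneg: "b \<in> B \<Longrightarrow> 0 \<le> marg_B A p b"
  unfolding marg_B_def using nonneg by (intro sum_nonneg) auto

lemma le_marg_A: "a \<in> A \<Longrightarrow> b \<in> B \<Longrightarrow> p a b \<le> marg_A B p a"
  unfolding marg_A_def using nonneg finite_B by (intro member_le_sum) auto

lemma le_marg_B: "a \<in> A \<Longrightarrow> b \<in> B \<Longrightarrow> p a b \<le> marg_B A p b"
  unfolding marg_B_def using nonneg finite_A by (intro member_le_sum) auto

lemma sum_marg_B: "(\<Sum>b\<in>B. marg_B A p b) = 1"
  using sum_eq_1 by (simp add: marg_B_def sum.swap[of _ B])

lemma marg_prod_nonneg: "a \<in> A \<Longrightarrow> b \<in> B \<Longrightarrow> 0 \<le> marg_prod a b"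
  by (simp add: marg_prod_def marg_A_nonneg marg_B_nonneg)

lemma square_le_marg_prod: "a \<in> A \<Longrightarrow> b \<in> B \<Longrightarrow> (p a b)\<^sup>2 \<le> marg_prod a b"
  unfolding marg_prod_def power2_eq_square
  by (intro mult_mono le_marg_A le_marg_B marg_A_nonneg) (auto simp: nonneg)

lemma sum_marg_prod: "(\<Sum>a\<in>A. \<Sum>b\<in>B. marg_prod a b) = 1"
proof -
  have "(\<Sum>a\<in>A. \<Sum>b\<in>B. marg_prod a b) = (\<Sum>a\<in>A. marg_A B p a) * (\<Sum>b\<in>B. marg_B A p b)"
    by (simp add: marg_prod_def sum_product)
  also have "\<dots> = 1"
    using sum_eq_1 by (simp only: sum_marg_B mult_1_right marg_A_def)
  finally show ?thesis .
qed

lemma hellinger_sq_prod_eq: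
  "hellinger_sq_prod A B p = (\<Sum>a\<in>A. \<Sum>b\<in>B. (sqrt (p a b) - sqrt (marg_prod a b))\<^sup>2)"
  by (simp add: hellinger_sq_prod_def marg_prod_def)

lemma mutual_info_eq_kl_sum:
  "mutual_info A B p = (\<Sum>a\<in>A. \<Sum>b\<in>B. p a b * ln (p a b / marg_prod a b) - p a b + marg_prod a b)"
proof -
  have "(\<Sum>a\<in>A. \<Sum>b\<in>B. p a b * ln (p a b / marg_prod a b) - p a b + marg_prod a b)
      = (\<Sum>a\<in>A. \<Sum>b\<in>B. p a b * ln (p a b / marg_prod a b))
        - (\<Sum>a\<in>A. \<Sum>b\<in>B. p a b) + (\<Sum>a\<in>A. \<Sum>b\<in>B. marg_prod a b)"
    by (simp only: sum.distrib sum_subtractf)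
  moreover have "mutual_info A B p = (\<Sum>a\<in>A. \<Sum>b\<in>B. p a b * ln (p a b / marg_prod a b))"
    by (simp add: mutual_info_def marg_prod_def)
  ultimately show ?thesis by (simp add: sum_eq_1 sum_marg_prod)
qed

lemma hellinger_sq_prod_eq_bhattacharyya:
  "hellinger_sq_prod A B p = 2 - 2 * (\<Sum>a\<in>A. \<Sum>b\<in>B. sqrt (p a b) * sqrt (marg_prod a b))"
proof -
  have "hellinger_sq_prod A B p
      = (\<Sum>a\<in>A. \<Sum>b\<in>B. p a b + marg_prod a b - 2 * (sqrt (p a b) * sqrt (marg_prod a b)))"
    unfolding hellinger_sq_prod_eq
    by (intro sum.cong refl) (simp add: power2_diff nonneg marg_prod_nonneg)
  then show ?thesis
    by (simp add: sum.distrib sum_subtractf sum_eq_1 sum_marg_prod sum_distrib_left)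
qed

lemma bhattacharyya_ge_marg_B:
  "(\<Sum>b\<in>B. marg_B A p b * sqrt (marg_B A p b))
     \<le> (\<Sum>a\<in>A. \<Sum>b\<in>B. sqrt (p a b) * sqrt (marg_prod a b))"
proof -
  have "p a b * sqrt (marg_B A p b) \<le> sqrt (p a b) * sqrt (marg_prod a b)" if "a \<in> A" "b \<in> B" for a b
  proof -
    have "p a b = sqrt (p a b * p a b)" using nonneg that by simp
    also have "\<dots> \<le> sqrt (p a b * marg_A B p a)"
      using that by (intro real_sqrt_le_mono mult_left_mono le_marg_A nonneg)
    finally have "p a b * sqrt (marg_B A p b) \<le> sqrt (p a b * marg_A B p a) * sqrt (marg_B A p b)"
      by (rule mult_right_mono) (simp add: marg_B_nonneg that)
    then show ?thesis by (simp add: marg_prod_def real_sqrt_mult mult.assoc)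
  qed
  then have "(\<Sum>a\<in>A. \<Sum>b\<in>B. p a b * sqrt (marg_B A p b))
      \<le> (\<Sum>a\<in>A. \<Sum>b\<in>B. sqrt (p a b) * sqrt (marg_prod a b))"
    by (intro sum_mono) auto
  then show ?thesis
    by (simp add: sum.swap[of _ A B] marg_B_def sum_distrib_right)
qed

lemma hellinger_sq_prod_le: "hellinger_sq_prod A B p \<le> 2 - 2 / sqrt (card B)"
  using sum_x_sqrt_x_ge[OF finite_B marg_B_nonneg sum_marg_B] bhattacharyya_ge_marg_B
  by (simp add: hellinger_sq_prod_eq_bhattacharyya)

lemma mutual_info_eq_0_if_hellinger_eq_0:
  assumes "hellinger_sq_prod A B p = 0"
  shows "mutual_info A B p = 0"
proof -
  have "(sqrt (p a b) - sqrt (marg_prod a b))\<^sup>2 = 0" if "a \<in> A" "b \<in> B" for a b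
    using assms that finite_A finite_B
    by (simp add: hellinger_sq_prod_eq sum_nonneg_eq_0_iff sum_nonneg)
  then have "p a b = marg_prod a b" if "a \<in> A" "b \<in> B" for a b
    using that nonneg marg_prod_nonneg by simp
  then show ?thesis
    by (auto simp: mutual_info_eq_kl_sum intro!: sum.neutral)
qed

lemma mutual_info_le_hellinger_slack:
  assumes "0 < t" "t \<le> 1"
  shows "mutual_info A B p \<le> 5 * hellinger_sq_prod A B p
           + 4 * hellinger_sq_prod A B p * ln (1 / t) + real (card A) * real (card B) * t"
proof -
  have "mutual_info A B p \<le> (\<Sum>a\<in>A. \<Sum>b\<in>B. 5 * (sqrt (p a b) - sqrt (marg_prod a b))\<^sup>2
          + 4 * (sqrt (p a b) - sqrt (marg_prod a b))\<^sup>2 * ln (1 / t) + t)"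
    unfolding mutual_info_eq_kl_sum
    using kl_summand_le nonneg square_le_marg_prod assms by (intro sum_mono) auto
  then show ?thesis
    by (simp add: sum.distrib hellinger_sq_prod_eq sum_distrib_left sum_distrib_right)
qed

lemma mutual_info_le_hellinger_log:
  assumes "card A = card B"
  shows "mutual_info A B p
           \<le> 38 * hellinger_sq_prod A B p * ln (card A / hellinger_sq_prod A B p)"
proof (cases "hellinger_sq_prod A B p = 0")
  case True
  then show ?thesis by (simp add: mutual_info_eq_0_if_hellinger_eq_0)
next
  case False
  define \<eta> d where "\<eta> = hellinger_sq_prod A B p" and "d = real (card A)"
  have "0 < \<eta>"
    using False by (simp add: \<eta>_def hellinger_sq_prod_eq sum_nonneg order.not_eq_order_implies_strict)
  have "A \<noteq> {}" using sum_eq_1 by auto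
  then have "0 < d" using finite_A by (simp add: d_def card_gt_0_iff)
  have "\<eta> \<le> 2 - 2 / sqrt d" using hellinger_sq_prod_le assms by (simp add: \<eta>_def d_def)
  note estimate = hellinger_log_estimate[OF \<open>0 < d\<close> \<open>0 < \<eta>\<close> this]
  have "mutual_info A B p \<le> 5 * \<eta> + 4 * \<eta> * ln (1 / (\<eta> / d\<^sup>2)) + d * d * (\<eta> / d\<^sup>2)"
    using mutual_info_le_hellinger_slack[of "\<eta> / d\<^sup>2"] estimate(1) \<open>0 < \<eta>\<close> \<open>0 < d\<close> assms
    by (simp add: \<eta>_def d_def)
  also have "\<dots> = 6 * \<eta> + 4 * \<eta> * ln (d\<^sup>2 / \<eta>)"
    using \<open>0 < d\<close> by (simp add: power2_eq_square)
  also have "\<dots> \<le> 38 * \<eta> * ln (d / \<eta>)"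
    by (rule estimate(2))
  finally show ?thesis by (simp add: \<eta>_def d_def)
qed

end

theorem corollary4p2:
  "\<exists>C::real. C > 0 \<and>
     (\<forall>(A::nat set) (B::nat set) (p::nat \<Rightarrow> nat \<Rightarrow> real).
        finite A \<and> finite B \<and> card A = card B \<and> is_joint_dist A B p \<longrightarrow>
        mutual_info A B p \<le>
          C * hellinger_sq_prod A B p * ln (real (card A) / hellinger_sq_prod A B p))"
proof (intro exI[of _ 38] conjI allI impI)
  fix A B :: "nat set" and p :: "nat \<Rightarrow> nat \<Rightarrow> real"
  assume "finite A \<and> finite B \<and> card A = card B \<and> is_joint_dist A B p"
  then show "mutual_info A B p \<le> 38 * hellinger_sq_prod A B p * ln (card A / hellinger_sq_prod A B p)"
    using joint_dist.mutual_info_le_hellinger_log joint_dist.intro by blast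
qed simp

end
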